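(* Let $w:\mathbb{C}\to\mathbb{R}$ be subharmonic and $u:\mathbb{C}\to\mathbb{R}$ harmonic. Suppose there exists a function $\Phi:\mathbb{R}\to[0,+\infty)$ which is locally bounded, satisfies $\lim_{|t|\to\infty}\Phi(t)/|t|=0$, and such that $w(z)\le\Phi(u(z))$ for all $z\in\mathbb{C}$. Then $w$ is constant. *)

theory Defs
  imports "HOL-Analysis.Analysis"
begin

definition harmonic_plane :: "(complex \<Rightarrow> real) \<Rightarrow> bool" where
  "harmonic_plane u \<longleftrightarrow>
     (\<exists>ux uy uxx uxy uyx uyy :: complex \<Rightarrow> real.
        (\<forall>z. (u has_derivative (\<lambda>h. Re h * ux z + Im h * uy z)) (at z)) \<and>
        (\<forall>z. (ux has_derivative (\<lambda>h. Re h * uxx z + Im h * uxy z)) (at z)) \<and>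
        (\<forall>z. (uy has_derivative (\<lambda>h. Re h * uyx z + Im h * uyy z)) (at z)) \<and>
        continuous_on UNIV uxx \<and> continuous_on UNIV uxy \<and>
        continuous_on UNIV uyx \<and> continuous_on UNIV uyy \<and>
        (\<forall>z. uxx z + uyy z = 0))"

text \<open>Subharmonic on the whole plane (real-valued): upper semicontinuous and
  satisfying the sub-mean-value inequality on every circle. (For a real-valued
  function the standard condition forces the circle mean to be finite, hence the
  integrability requirement.)\<close>
definition subharmonic_plane :: "(complex \<Rightarrow> real) \<Rightarrow> bool" where
  "subharmonic_plane w \<longleftrightarrow>
     (\<forall>c. open {z. w z < c}) \<and>
     (\<forall>a r. r > 0 \<longrightarrow>
        (\<lambda>t. w (a + of_real r * cis t)) integrable_on {0..2*pi} \<and>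
        w a \<le> (1 / (2*pi)) * integral {0..2*pi} (\<lambda>t. w (a + of_real r * cis t)))"

end

(*
  Sublinear growth of \<Phi> makes w bounded above. On the region {u > 0} the function
  w - \<epsilon> u - \<eta> ln |z| satisfies the maximum principle (u and ln |z| have the circle mean value
  property), and on the boundary of {u > 0} \<inter> {1 < |z| < \<rho>} it is bounded independently of
  \<epsilon>, \<eta> once \<rho> is large, because w \<le> \<Phi>(u) \<le> \<epsilon> |u| + C. Letting \<eta> and then \<epsilon> tend to 0
  bounds w on {u \<ge> 0}, and likewise on {u \<le> 0}. A subharmonic function on the plane that is
  bounded above is constant: comparing w with w(a) + e + \<eta> ln (|z - a| / r) on annuli around a
  gives w(z) \<le> w(a).
  The maximum principle for w + h, with h continuous and having the mean value property, is
  proved at a maximum point with largest imaginary part: the upper arc of a small circle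
  around it lies strictly below the maximum, contradicting the sub-mean value inequality.
  The circle means of a C^2 harmonic u are constant in the radius r, because with
  N(r) the integral of the radial derivative over the circle, d/dr (r N(r)) is r times the
  integral of the Laplacian.
*)

theory Submission
  imports Defs "HOL-Complex_Analysis.Cauchy_Integral_Formula"
begin

definition mean_value_on :: "(complex \<Rightarrow> real) \<Rightarrow> complex set \<Rightarrow> bool" where
  "mean_value_on h S \<longleftrightarrow>
     (\<forall>p r. 0 < r \<longrightarrow> cball p r \<subseteq> S \<longrightarrow>
        ((\<lambda>t. h (p + of_real r * cis t)) has_integral (2 * pi * h p)) {0..2*pi})"

lemma mean_value_onD:
  "mean_value_on h S \<Longrightarrow> 0 < r \<Longrightarrow> cball p r \<subseteq> S \<Longrightarrow>
     ((\<lambda>t. h (p + of_real r * cis t)) has_integral (2 * pi * h p)) {0..2*pi}"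
  unfolding mean_value_on_def by blast

lemma mean_value_on_subset: "mean_value_on h T \<Longrightarrow> S \<subseteq> T \<Longrightarrow> mean_value_on h S"
  unfolding mean_value_on_def by blast

lemma mean_value_on_const: "mean_value_on (\<lambda>_. c) S"
  unfolding mean_value_on_def using has_integral_const_real[of c 0 "2*pi"] by (simp add: mult_ac)

lemma mean_value_on_diff:
  assumes "mean_value_on f S" "mean_value_on g S"
  shows "mean_value_on (\<lambda>z. f z - g z) S"
  unfolding mean_value_on_def
proof (intro allI impI)
  fix p r assume "0 < r" "cball p r \<subseteq> S"
  from has_integral_diff[OF mean_value_onD[OF assms(1) this] mean_value_onD[OF assms(2) this]]
  show "((\<lambda>t. f (p + of_real r * cis t) - g (p + of_real r * cis t)) has_integral (2 * pi * (f p - g p))) {0..2*pi}"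
    by (simp add: right_diff_distrib)
qed

lemma mean_value_on_cmult:
  assumes "mean_value_on f S"
  shows "mean_value_on (\<lambda>z. c * f z) S"
  unfolding mean_value_on_def
proof (intro allI impI)
  fix p r assume "0 < r" "cball p r \<subseteq> S"
  from has_integral_mult_right[OF mean_value_onD[OF assms this], of c]
  show "((\<lambda>t. c * f (p + of_real r * cis t)) has_integral (2 * pi * (c * f p))) {0..2*pi}"
    by (simp add: mult_ac)
qed

lemma mean_value_on_Re_holomorphic:
  assumes "f holomorphic_on S" "open S"
  shows "mean_value_on (\<lambda>z. Re (f z)) S"
  unfolding mean_value_on_def
proof (intro allI impI)
  fix p r assume r: "0 < r" and sub: "cball p r \<subseteq> S"
  have hol: "f holomorphic_on cball p r"
    using assms(1) sub by (rule holomorphic_on_subset)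
  have "((\<lambda>z. f z / (z - p)) has_contour_integral (2 * of_real pi * \<i> * f p)) (circlepath p r)"
    using hol r by (intro Cauchy_integral_circlepath)
      (auto intro: holomorphic_on_imp_continuous_on holomorphic_on_subset)
  hence "((\<lambda>t. f (p + r * cis t) / (p + r * cis t - p) * r * \<i> * cis t)
           has_integral (2 * of_real pi * \<i> * f p)) {0..2*pi}"
    unfolding circlepath_def by (subst (asm) has_contour_integral_part_circlepath_iff) auto
  hence "((\<lambda>t. \<i> * f (p + r * cis t)) has_integral (2 * of_real pi * \<i> * f p)) {0..2*pi}"
    by (rule has_integral_eq[rotated]) (use r in \<open>auto simp: field_simps\<close>)
  from has_integral_linear[OF has_integral_mult_right[OF this, of "-\<i>"] bounded_linear_Re]
  show "((\<lambda>t. Re (f (p + of_real r * cis t))) has_integral (2 * pi * Re (f p))) {0..2*pi}"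
    by (simp add: o_def)
qed

lemma mean_value_on_ln_norm_diff:
  assumes "b \<notin> S"
  shows "mean_value_on (\<lambda>z. ln (cmod (z - b))) S"
  unfolding mean_value_on_def
proof (intro allI impI)
  fix p r assume r: "0 < r" and sub: "cball p r \<subseteq> S"
  define R where "R = cmod (p - b)"
  have "b \<notin> cball p r" using assms sub by blast
  hence rR: "r < R" by (simp add: R_def dist_norm)
  have pb: "p \<noteq> b" using rR r R_def by auto
  define f where "f z = Ln ((z - b) / (p - b))" for z
  \<comment> \<open>on the disc of radius R about p the quotient lies in the right half plane, so Ln is holomorphic\<close>
  have slit: "(z - b) / (p - b) \<notin> \<real>\<^sub>\<le>\<^sub>0" if "z \<in> ball p R" for z
  proof -
    have "(z - b) / (p - b) - 1 = (z - p) / (p - b)" using pb by (simp add: field_simps)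
    hence "cmod ((z - b) / (p - b) - 1) < 1"
      using that pb by (simp add: R_def norm_divide dist_norm norm_minus_commute)
    hence "Re ((z - b) / (p - b)) > 0"
      by (smt (verit) abs_Re_le_cmod minus_complex.simps(1) one_complex.simps(1))
    thus ?thesis by (auto simp: complex_nonpos_Reals_iff)
  qed
  have "f holomorphic_on ball p R"
    unfolding f_def using pb slit by (intro holomorphic_intros) auto
  hence "((\<lambda>t. Re (f (p + of_real r * cis t))) has_integral (2 * pi * Re (f p))) {0..2*pi}"
    using r rR by (intro mean_value_onD[OF mean_value_on_Re_holomorphic]) auto
  moreover have "Re (f p) = 0" using pb by (simp add: f_def)
  moreover have "Re (f (p + of_real r * cis t)) = ln (cmod (p + of_real r * cis t - b)) - ln R" for t
  proof -
    have "p + of_real r * cis t - b \<noteq> 0" using rR r by (auto simp: R_def dist_norm norm_mult)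
    thus ?thesis unfolding f_def using pb by (subst Re_Ln) (auto simp: norm_divide R_def ln_div)
  qed
  ultimately have "((\<lambda>t. ln (cmod (p + of_real r * cis t - b)) - ln R) has_integral 0) {0..2*pi}"
    by simp
  from has_integral_add[OF this has_integral_const_real[of "ln R" 0 "2*pi"]]
  show "((\<lambda>t. ln (cmod (p + of_real r * cis t - b))) has_integral (2 * pi * ln (cmod (p - b)))) {0..2*pi}"
    by (simp add: R_def mult_ac)
qed

lemma has_field_derivative_along_ray:
  assumes "\<And>z. (g has_derivative (\<lambda>h. Re h * gx z + Im h * gy z)) (at z)"
  shows "((\<lambda>r. g (p + of_real r * cis t)) has_field_derivative
           gx (p + of_real r * cis t) * cos t + gy (p + of_real r * cis t) * sin t) (at r)"
proof -
  have "((\<lambda>r. p + of_real r * cis t) has_derivative (\<lambda>h. of_real h * cis t)) (at r)"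
    by (auto intro!: derivative_eq_intros)
  from has_derivative_compose[OF this assms] show ?thesis
    unfolding has_field_derivative_def
    by (rule has_derivative_eq_rhs) (auto simp: algebra_simps fun_eq_iff)
qed

lemma has_field_derivative_along_circle:
  assumes "\<And>z. (g has_derivative (\<lambda>h. Re h * gx z + Im h * gy z)) (at z)"
  shows "((\<lambda>t. g (p + of_real r * cis t)) has_field_derivative
           r * (gy (p + of_real r * cis t) * cos t - gx (p + of_real r * cis t) * sin t)) (at t)"
proof -
  have "((\<lambda>t. p + of_real r * cis t) has_derivative (\<lambda>h. of_real r * (h *\<^sub>R (\<i> * cis t)))) (at t)"
    by (auto intro!: derivative_eq_intros)
  from has_derivative_compose[OF this assms] show ?thesis
    unfolding has_field_derivative_def
    by (rule has_derivative_eq_rhs) (auto simp: algebra_simps fun_eq_iff)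
qed

lemma has_integral_periodic_derivative:
  fixes q :: "real \<Rightarrow> real"
  assumes "\<And>t. (q has_field_derivative q' t) (at t)" and "a \<le> b" and "q b = q a"
  shows "(q' has_integral 0) {a..b}"
proof -
  have "(q' has_integral (q b - q a)) {a..b}"
    using assms(1,2) by (intro fundamental_theorem_of_calculus)
      (auto simp: has_real_derivative_iff_has_vector_derivative[symmetric] has_field_derivative_at_within)
  thus ?thesis using assms(3) by simp
qed

locale C2_plane =
  fixes u ux uy uxx uxy uyx uyy :: "complex \<Rightarrow> real"
  assumes has_derivative_u: "\<And>z. (u has_derivative (\<lambda>h. Re h * ux z + Im h * uy z)) (at z)"
    and has_derivative_ux: "\<And>z. (ux has_derivative (\<lambda>h. Re h * uxx z + Im h * uxy z)) (at z)"
    and has_derivative_uy: "\<And>z. (uy has_derivative (\<lambda>h. Re h * uyx z + Im h * uyy z)) (at z)"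
    and continuous_second_partials:
      "continuous_on UNIV uxx" "continuous_on UNIV uxy" "continuous_on UNIV uyx" "continuous_on UNIV uyy"
begin

lemma continuous_on_u: "continuous_on UNIV u"
  using has_derivative_u by (meson continuous_at_imp_continuous_on has_derivative_continuous)

lemma continuous_on_compose_partials [continuous_intros]:
  assumes "continuous_on S f"
  shows "continuous_on S (\<lambda>x. u (f x))" "continuous_on S (\<lambda>x. ux (f x))" "continuous_on S (\<lambda>x. uy (f x))"
    "continuous_on S (\<lambda>x. uxx (f x))" "continuous_on S (\<lambda>x. uxy (f x))"
    "continuous_on S (\<lambda>x. uyx (f x))" "continuous_on S (\<lambda>x. uyy (f x))"
proof -
  have "continuous_on UNIV ux" "continuous_on UNIV uy"
    using has_derivative_ux has_derivative_uy
    by (meson continuous_at_imp_continuous_on has_derivative_continuous)+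
  thus "continuous_on S (\<lambda>x. u (f x))" "continuous_on S (\<lambda>x. ux (f x))" "continuous_on S (\<lambda>x. uy (f x))"
    "continuous_on S (\<lambda>x. uxx (f x))" "continuous_on S (\<lambda>x. uxy (f x))"
    "continuous_on S (\<lambda>x. uyx (f x))" "continuous_on S (\<lambda>x. uyy (f x))"
    using continuous_on_u continuous_second_partials
    by (auto intro: continuous_on_compose2[OF _ assms])
qed

definition radial_derivative :: "complex \<Rightarrow> real \<Rightarrow> real \<Rightarrow> real" where
  "radial_derivative p r t = ux (p + of_real r * cis t) * cos t + uy (p + of_real r * cis t) * sin t"

definition second_radial_derivative :: "complex \<Rightarrow> real \<Rightarrow> real \<Rightarrow> real" where
  "second_radial_derivative p r t =
     (uxx (p + of_real r * cis t) * cos t + uxy (p + of_real r * cis t) * sin t) * cos t +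
     (uyx (p + of_real r * cis t) * cos t + uyy (p + of_real r * cis t) * sin t) * sin t"

definition radial_flux :: "complex \<Rightarrow> real \<Rightarrow> real" where
  "radial_flux p r = integral {0..2*pi} (radial_derivative p r)"

lemma has_field_derivative_circle_integral:
  "((\<lambda>r. integral {0..2*pi} (\<lambda>t. u (p + of_real r * cis t))) has_field_derivative radial_flux p r) (at r)"
proof -
  have "((\<lambda>r. integral (cbox 0 (2*pi)) (\<lambda>t. u (p + of_real r * cis t))) has_field_derivative
          integral (cbox 0 (2*pi)) (radial_derivative p r)) (at r within UNIV)"
    unfolding radial_derivative_def
    by (rule leibniz_rule_field_derivative)
      (auto intro!: has_field_derivative_along_ray has_derivative_u integrable_continuous_real continuous_intros
            simp: split_beta)
  thus ?thesis by (simp add: radial_flux_def cbox_interval)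
qed

lemma has_field_derivative_radial_flux:
  "(radial_flux p has_field_derivative integral {0..2*pi} (second_radial_derivative p r)) (at r)"
proof -
  have "((\<lambda>x. radial_derivative p x t) has_field_derivative second_radial_derivative p x t) (at x)" for x t
    unfolding radial_derivative_def second_radial_derivative_def
    by (intro DERIV_add DERIV_cmult_right has_field_derivative_along_ray has_derivative_ux has_derivative_uy)
  hence "((\<lambda>x. integral (cbox 0 (2*pi)) (radial_derivative p x)) has_field_derivative
           integral (cbox 0 (2*pi)) (second_radial_derivative p r)) (at r within UNIV)"
    unfolding radial_derivative_def second_radial_derivative_def
    by (intro leibniz_rule_field_derivative)
      (auto intro!: integrable_continuous_real continuous_intros simp: split_beta)
  moreover have "radial_flux p = (\<lambda>x. integral {0..2*pi} (radial_derivative p x))"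
    by (simp add: fun_eq_iff radial_flux_def)
  ultimately show ?thesis by (simp add: cbox_interval)
qed

lemma has_field_derivative_radius_times_flux:
  "((\<lambda>r. r * radial_flux p r) has_field_derivative
      r * integral {0..2*pi} (\<lambda>t. uxx (p + of_real r * cis t) + uyy (p + of_real r * cis t))) (at r)"
proof -
  define g where "g t = p + of_real r * cis t" for t
  define q where "q t = uy (g t) * cos t - ux (g t) * sin t" for t
  define q' where "q' t = r * (uyy (g t) * cos t - uyx (g t) * sin t) * cos t - uy (g t) * sin t
      - (r * (uxy (g t) * cos t - uxx (g t) * sin t) * sin t + ux (g t) * cos t)" for t
  \<comment> \<open>Green's identity in polar coordinates: the angular derivative q' integrates to zero\<close>
  have "(q has_field_derivative q' t) (at t)" for t
    unfolding q_def q'_def g_def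
    by (auto intro!: derivative_eq_intros has_field_derivative_along_circle has_derivative_ux has_derivative_uy)
  hence q'_integral: "(q' has_integral 0) {0..2*pi}"
    by (rule has_integral_periodic_derivative) (auto simp: q_def g_def)
  have identity: "radial_derivative p r t + r * second_radial_derivative p r t
      = r * (uxx (g t) + uyy (g t)) - q' t" for t
  proof -
    have "radial_derivative p r t + r * second_radial_derivative p r t + q' t
        = r * (uxx (g t) + uyy (g t)) * ((sin t)\<^sup>2 + (cos t)\<^sup>2)"
      unfolding radial_derivative_def second_radial_derivative_def q'_def g_def power2_eq_square by algebra
    thus ?thesis by simp
  qed
  have "((\<lambda>t. r * (uxx (g t) + uyy (g t))) has_integral r * integral {0..2*pi} (\<lambda>t. uxx (g t) + uyy (g t)))
          {0..2*pi}"
    unfolding g_def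
    by (intro has_integral_mult_right integrable_integral integrable_continuous_real continuous_intros)
  from has_integral_diff[OF this q'_integral]
  have "((\<lambda>t. radial_derivative p r t + r * second_radial_derivative p r t) has_integral
          r * integral {0..2*pi} (\<lambda>t. uxx (g t) + uyy (g t))) {0..2*pi}"
    unfolding identity by simp
  moreover have "((\<lambda>t. radial_derivative p r t + r * second_radial_derivative p r t) has_integral
          radial_flux p r + r * integral {0..2*pi} (second_radial_derivative p r)) {0..2*pi}"
    unfolding radial_flux_def radial_derivative_def second_radial_derivative_def
    by (intro has_integral_add has_integral_mult_right integrable_integral integrable_continuous_real
        continuous_intros)
  ultimately have "radial_flux p r + r * integral {0..2*pi} (second_radial_derivative p r)
      = r * integral {0..2*pi} (\<lambda>t. uxx (g t) + uyy (g t))"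
    by (metis has_integral_unique)
  with has_field_derivative_radial_flux[of p r] show ?thesis
    by (auto intro!: derivative_eq_intros simp: g_def mult.commute)
qed

end

lemma harmonic_plane_iff:
  "harmonic_plane u \<longleftrightarrow>
     (\<exists>ux uy uxx uxy uyx uyy. C2_plane u ux uy uxx uxy uyx uyy \<and> (\<forall>z. uxx z + uyy z = 0))"
  unfolding harmonic_plane_def C2_plane_def by blast

lemma harmonic_plane_continuous: "harmonic_plane u \<Longrightarrow> continuous_on UNIV u"
  unfolding harmonic_plane_iff using C2_plane.continuous_on_u by blast

lemma harmonic_plane_mean_value_on:
  assumes "harmonic_plane u"
  shows "mean_value_on u UNIV"
  unfolding mean_value_on_def
proof (intro allI impI)
  fix p :: complex and r :: real assume r: "0 < r"
  obtain ux uy uxx uxy uyx uyy where "C2_plane u ux uy uxx uxy uyx uyy" and harmonic: "\<And>z. uxx z + uyy z = 0"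
    using assms unfolding harmonic_plane_iff by blast
  then interpret C2_plane u ux uy uxx uxy uyx uyy by simp
  define M where "M x = integral {0..2*pi} (\<lambda>t. u (p + of_real x * cis t))" for x
  have "((\<lambda>x. x * radial_flux p x) has_field_derivative 0) (at x)" for x
    using has_field_derivative_radius_times_flux[of p x] by (simp add: harmonic)
  hence "x * radial_flux p x = 0 * radial_flux p 0" for x
    by (rule DERIV_isconst_all[rule_format])
  hence flux_zero: "radial_flux p x = 0" if "x \<noteq> 0" for x
    using that by (metis mult_eq_0_iff)
  have "M r = M 0"
  proof (rule DERIV_isconst2[of 0 r])
    fix x :: real assume "0 < x" "x < r"
    thus "(M has_field_derivative 0) (at x)"
      using has_field_derivative_circle_integral[of p x] flux_zero[of x] by (simp add: M_def[abs_def])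
  next
    show "continuous_on {0..r} M"
      using has_field_derivative_circle_integral[of p] unfolding M_def[abs_def]
      by (meson DERIV_continuous continuous_at_imp_continuous_on)
  qed (use r in auto)
  also have "M 0 = 2 * pi * u p" by (simp add: M_def)
  finally have "integral {0..2*pi} (\<lambda>t. u (p + of_real r * cis t)) = 2 * pi * u p"
    by (simp add: M_def)
  moreover have "(\<lambda>t. u (p + of_real r * cis t)) integrable_on {0..2*pi}"
    by (intro integrable_continuous_real continuous_intros)
  ultimately show "((\<lambda>t. u (p + of_real r * cis t)) has_integral (2 * pi * u p)) {0..2*pi}"
    by (metis integrable_integral)
qed

lemma closed_superlevel_usc_add_continuous:
  fixes w h :: "'a::topological_space \<Rightarrow> real"
  assumes usc: "\<And>c. open {z. w z < c}" and "closed K" and "continuous_on K h"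
  shows "closed {z \<in> K. c \<le> w z + h z}"
proof -
  have "{z \<in> K. c \<le> w z + h z} = K \<inter> (\<Inter>q. {z. q \<le> w z} \<union> {z \<in> K. c - q \<le> h z})"
  proof (intro equalityI subsetI)
    fix z assume z: "z \<in> K \<inter> (\<Inter>q. {z. q \<le> w z} \<union> {z \<in> K. c - q \<le> h z})"
    show "z \<in> {z \<in> K. c \<le> w z + h z}"
    proof (rule ccontr)
      assume "z \<notin> {z \<in> K. c \<le> w z + h z}"
      with z have "w z + h z < c" by auto
      with z show False by (auto dest!: spec[of _ "(w z + c - h z) / 2"] simp: field_simps)
    qed
  qed auto
  moreover have "closed {z. q \<le> w z}" for q
    using usc[of q] by (simp add: closed_def Compl_eq not_le)
  moreover have "closed {z \<in> K. c - q \<le> h z}" for q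
    using assms(2,3) by (intro continuous_on_closed_Collect_le continuous_intros)
  ultimately show ?thesis using assms(2) by (simp add: closed_Int closed_INT closed_Un)
qed

lemma usc_attains_max_on_compact:
  fixes v :: "'a::topological_space \<Rightarrow> real"
  assumes "compact C" "C \<noteq> {}" and closed_superlevel: "\<And>c. closed {z \<in> C. c \<le> v z}"
  shows "\<exists>p\<in>C. \<forall>z\<in>C. v z \<le> v p"
proof (rule ccontr)
  assume "\<not> ?thesis"
  hence cover: "C \<subseteq> (\<Union>q\<in>C. - {z \<in> C. v q \<le> v z})" by (force simp: not_le)
  obtain Q where Q: "Q \<subseteq> C" "finite Q" "C \<subseteq> (\<Union>q\<in>Q. - {z \<in> C. v q \<le> v z})"
    by (rule compactE_image[OF assms(1) _ cover]) (use closed_superlevel in \<open>auto simp: open_Compl\<close>)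
  hence "Q \<noteq> {}" using assms(2) by auto
  hence "Max (v ` Q) \<in> v ` Q" using Q(2) by (intro Max_in) auto
  then obtain q0 where q0: "q0 \<in> Q" "v q0 = Max (v ` Q)" by auto
  hence q0_max: "v q \<le> v q0" if "q \<in> Q" for q
    using Q(2) that by simp
  obtain q where "q \<in> Q" "q0 \<notin> {z \<in> C. v q \<le> v z}" using q0(1) Q by blast
  thus False using q0_max q0(1) Q(1) by force
qed

lemma integral_lt_of_le_and_lt_on_subinterval:
  fixes f :: "real \<Rightarrow> real"
  assumes f: "f integrable_on {a..b}" and cd: "a \<le> c" "c \<le> d" "d \<le> b" "c < d"
    and le: "\<And>t. t \<in> {a..b} \<Longrightarrow> f t \<le> S" and le': "\<And>t. t \<in> {c..d} \<Longrightarrow> f t \<le> S'" and "S' < S"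
  shows "integral {a..b} f < (b - a) * S"
proof -
  have f': "f integrable_on {a..c}" "f integrable_on {c..d}" "f integrable_on {d..b}" "f integrable_on {c..b}"
    using cd by (auto intro: integrable_subinterval_real[OF f])
  have "integral {a..b} f = integral {a..c} f + integral {c..b} f"
    using f cd by (intro Henstock_Kurzweil_Integration.integral_combine[symmetric]) auto
  also have "integral {c..b} f = integral {c..d} f + integral {d..b} f"
    using f' cd by (intro Henstock_Kurzweil_Integration.integral_combine[symmetric]) auto
  also have "integral {a..c} f \<le> integral {a..c} (\<lambda>_. S)"
    using f'(1) cd by (intro integral_le le) auto
  also have "integral {c..d} f \<le> integral {c..d} (\<lambda>_. S')"
    using f'(2) by (intro integral_le le') auto
  also have "integral {d..b} f \<le> integral {d..b} (\<lambda>_. S)"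
    using f'(3) cd by (intro integral_le le) auto
  finally have "integral {a..b} f \<le> (c - a) * S + (d - c) * S' + (b - d) * S"
    using cd by simp
  also have "\<dots> < (b - a) * S"
    using mult_strict_left_mono[OF \<open>S' < S\<close>, of "d - c"] cd by (simp add: algebra_simps)
  finally show ?thesis .
qed

lemma subharmonic_add_mean_value_upper_arc:
  fixes w h :: "complex \<Rightarrow> real"
  assumes sub: "subharmonic_plane w" and h: "mean_value_on h (cball p s)" "continuous_on (cball p s) h"
    and s: "0 < s"
    and le: "\<And>t. w (p + of_real s * cis t) + h (p + of_real s * cis t) \<le> w p + h p"
  shows "\<exists>t\<in>{pi/4..3*pi/4}. w p + h p \<le> w (p + of_real s * cis t) + h (p + of_real s * cis t)"
proof (rule ccontr)
  define q where "q t = p + of_real s * cis t" for t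
  define v where "v z = w z + h z" for z
  assume "\<not> ?thesis"
  hence arc_lt: "v (q t) < v p" if "t \<in> {pi/4..3*pi/4}" for t
    using that by (auto simp: v_def q_def not_le)
  define B where "B = q ` {pi/4..3*pi/4}"
  have "compact B" unfolding B_def q_def by (intro compact_continuous_image continuous_intros) auto
  moreover have "B \<subseteq> cball p s" using s by (auto simp: B_def q_def dist_norm norm_mult)
  hence "closed {z \<in> B. c \<le> v z}" for c
    unfolding v_def using sub \<open>compact B\<close>
    by (intro closed_superlevel_usc_add_continuous compact_imp_closed continuous_on_subset[OF h(2)])
      (auto simp: subharmonic_plane_def)
  ultimately obtain z1 where z1: "z1 \<in> B" "\<And>z. z \<in> B \<Longrightarrow> v z \<le> v z1"
    using usc_attains_max_on_compact[of B v] by (auto simp: B_def)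
  have w_integral: "(\<lambda>t. w (q t)) integrable_on {0..2*pi}"
    and submean: "2 * pi * w p \<le> integral {0..2*pi} (\<lambda>t. w (q t))"
    using sub s by (auto simp: subharmonic_plane_def q_def field_simps)
  have h_integral: "((\<lambda>t. h (q t)) has_integral (2 * pi * h p)) {0..2*pi}"
    unfolding q_def using s by (intro mean_value_onD[OF h(1)]) auto
  have "integral {0..2*pi} (\<lambda>t. v (q t)) = integral {0..2*pi} (\<lambda>t. w (q t)) + 2 * pi * h p"
    unfolding v_def using w_integral h_integral by (simp add: integral_add integral_unique has_integral_integrable)
  hence "2 * pi * v p \<le> integral {0..2*pi} (\<lambda>t. v (q t))"
    using submean by (simp add: v_def algebra_simps)
  moreover have "integral {0..2*pi} (\<lambda>t. v (q t)) < (2 * pi - 0) * v p"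
  proof (rule integral_lt_of_le_and_lt_on_subinterval[where c="pi/4" and d="3*pi/4" and S'="v z1"])
    show "(\<lambda>t. v (q t)) integrable_on {0..2*pi}"
      unfolding v_def using w_integral h_integral by (intro integrable_add) auto
    show "v (q t) \<le> v p" for t using le by (simp add: v_def q_def)
    show "v (q t) \<le> v z1" if "t \<in> {pi/4..3*pi/4}" for t using z1(2) that by (auto simp: B_def)
    show "v z1 < v p" using z1(1) arc_lt by (auto simp: B_def)
  qed auto
  ultimately show False by simp
qed

lemma subharmonic_add_mean_value_maximum_principle:
  fixes w h :: "complex \<Rightarrow> real"
  assumes sub: "subharmonic_plane w" and \<Omega>: "open \<Omega>" "bounded \<Omega>"
    and h: "continuous_on (closure \<Omega>) h" "mean_value_on h \<Omega>"
    and frontier: "\<And>z. z \<in> frontier \<Omega> \<Longrightarrow> w z + h z \<le> m" and z: "z \<in> \<Omega>"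
  shows "w z + h z \<le> m"
proof (rule ccontr)
  assume "\<not> w z + h z \<le> m"
  define v where "v y = w y + h y" for y
  define K where "K = closure \<Omega>"
  have K: "compact K" "z \<in> K" using \<Omega>(2) z closure_subset by (auto simp: K_def compact_closure)
  have closed_superlevel: "closed {y \<in> K. c \<le> v y}" for c
    unfolding v_def K_def using sub h(1)
    by (intro closed_superlevel_usc_add_continuous) (auto simp: subharmonic_plane_def)
  obtain p0 where p0: "p0 \<in> K" "\<And>y. y \<in> K \<Longrightarrow> v y \<le> v p0"
    using usc_attains_max_on_compact[OF K(1) _ closed_superlevel] K(2) by blast
  define A where "A = {y \<in> K. v p0 \<le> v y}"
  have "A = K \<inter> {y \<in> K. v p0 \<le> v y}" by (auto simp: A_def)
  hence "compact A" using compact_Int_closed[OF K(1) closed_superlevel] by simp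
  hence "compact (Im ` A)" by (intro compact_continuous_image continuous_intros)
  moreover have "A \<noteq> {}" using p0 by (auto simp: A_def)
  ultimately obtain p where p: "p \<in> A" "\<And>y. y \<in> A \<Longrightarrow> Im y \<le> Im p"
    using compact_attains_sup[of "Im ` A"] by auto
  have vp: "v p = v p0" using p(1) p0(2) by (auto simp: A_def intro: antisym)
  have "p \<in> \<Omega>"
  proof (rule ccontr)
    assume "p \<notin> \<Omega>"
    hence "p \<in> frontier \<Omega>" using p(1) \<Omega>(1) by (simp add: A_def K_def frontier_def interior_open)
    thus False using frontier[of p] vp p0(2)[OF K(2)] \<open>\<not> w z + h z \<le> m\<close> by (simp add: v_def)
  qed
  then obtain s where s: "0 < s" "cball p s \<subseteq> \<Omega>" using \<Omega>(1) open_contains_cball by metis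
  have circle_in_K: "p + of_real s * cis t \<in> K" for t
    using s closure_subset by (force simp: K_def dist_norm norm_mult)
  have "continuous_on (cball p s) h"
    using s(2) closure_subset by (intro continuous_on_subset[OF h(1)]) auto
  moreover have "v (p + of_real s * cis t) \<le> v p" for t using circle_in_K p0(2) vp by simp
  ultimately obtain t where t: "t \<in> {pi/4..3*pi/4}" and "v p \<le> v (p + of_real s * cis t)"
    using subharmonic_add_mean_value_upper_arc[OF sub mean_value_on_subset[OF h(2) s(2)] _ s(1)]
    unfolding v_def by blast
  hence "p + of_real s * cis t \<in> A" using vp circle_in_K by (simp add: A_def)
  hence "Im (p + of_real s * cis t) \<le> Im p" by (rule p(2))
  moreover have "sin t > 0"
  proof (rule sin_gt_zero)
    have "pi/4 \<le> t" "t \<le> 3*pi/4" using t by auto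
    thus "0 < t" "t < pi" using pi_gt_zero by linarith+
  qed
  ultimately show False using s(1) by (simp add: mult_le_0_iff)
qed

lemma usc_bounded_above_on_compact:
  fixes w :: "complex \<Rightarrow> real"
  assumes usc: "\<And>c. open {z. w z < c}" and "compact C"
  shows "\<exists>K. \<forall>z\<in>C. w z \<le> K"
proof (cases "C = {}")
  case False
  have "closed {z \<in> C. c \<le> w z + 0}" for c
    using assms by (intro closed_superlevel_usc_add_continuous compact_imp_closed continuous_intros)
  thus ?thesis using usc_attains_max_on_compact[OF \<open>compact C\<close> False, of w] by auto
qed simp

lemma le_of_forall_pos_le_add_mult:
  fixes a b c :: real
  assumes le: "\<And>\<eta>. 0 < \<eta> \<Longrightarrow> a \<le> b + \<eta> * c" and "0 \<le> c"
  shows "a \<le> b"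
proof (rule field_le_epsilon)
  fix e :: real assume "0 < e"
  hence "a \<le> b + e / (c + 1) * c" using \<open>0 \<le> c\<close> by (intro le) auto
  also have "e / (c + 1) * c \<le> e" using \<open>0 < e\<close> \<open>0 \<le> c\<close> by (simp add: field_simps)
  finally show "a \<le> b + e" by simp
qed

lemma sublinear_growth_bound:
  fixes \<Phi> :: "real \<Rightarrow> real"
  assumes locally_bounded: "\<forall>x. \<exists>e>0. bounded (\<Phi> ` ball x e)"
    and sublinear: "((\<lambda>t. \<Phi> t / \<bar>t\<bar>) \<longlongrightarrow> 0) at_infinity" and "0 < \<epsilon>"
  shows "\<exists>C. \<forall>t. \<Phi> t \<le> \<epsilon> * \<bar>t\<bar> + C"
proof -
  obtain T0 where T0: "\<And>t. T0 \<le> norm t \<Longrightarrow> dist (\<Phi> t / \<bar>t\<bar>) 0 < \<epsilon>"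
    using tendstoD[OF sublinear \<open>0 < \<epsilon>\<close>] unfolding eventually_at_infinity by blast
  define T where "T = max T0 1"
  have large: "\<Phi> t \<le> \<epsilon> * \<bar>t\<bar>" if "T \<le> \<bar>t\<bar>" for t
  proof -
    have "0 < \<bar>t\<bar>" using that by (auto simp: T_def)
    moreover have "\<bar>\<Phi> t / \<bar>t\<bar>\<bar> < \<epsilon>" using T0[of t] that by (simp add: T_def dist_real_def)
    ultimately show ?thesis by (simp add: field_simps abs_less_iff)
  qed
  obtain e where e: "\<And>x. 0 < e x \<and> bounded (\<Phi> ` ball x (e x))" using locally_bounded by metis
  have cover: "{-T..T} \<subseteq> (\<Union>x\<in>{-T..T}. ball x (e x))" using e by force
  obtain Q where Q: "finite Q" "{-T..T} \<subseteq> (\<Union>x\<in>Q. ball x (e x))"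
    by (rule compactE_image[OF compact_Icc _ cover]) auto
  have "bounded (\<Union>x\<in>Q. \<Phi> ` ball x (e x))" using Q(1) e by (intro bounded_UN) auto
  hence "bounded (\<Phi> ` {-T..T})" by (rule bounded_subset) (use Q(2) in blast)
  then obtain B where B: "\<And>t. t \<in> {-T..T} \<Longrightarrow> \<bar>\<Phi> t\<bar> \<le> B"
    unfolding bounded_real by blast
  have "\<Phi> t \<le> \<epsilon> * \<bar>t\<bar> + B" for t
  proof (cases "T \<le> \<bar>t\<bar>")
    case True
    moreover have "0 \<le> B" using B[of 0] by (force simp: T_def)
    ultimately show ?thesis using large by fastforce
  next
    case False
    hence "t \<in> {-T..T}" by auto
    hence "\<Phi> t \<le> B" using B[of t] by simp
    moreover have "0 \<le> \<epsilon> * \<bar>t\<bar>" using \<open>0 < \<epsilon>\<close> by simp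
    ultimately show ?thesis by linarith
  qed
  thus ?thesis by blast
qed

lemma subharmonic_le_log_barrier_where_pos:
  fixes w U :: "complex \<Rightarrow> real"
  assumes sub: "subharmonic_plane w" and U: "continuous_on UNIV U" "mean_value_on U UNIV"
    and zero_set: "\<And>z. U z = 0 \<Longrightarrow> w z \<le> M" and unit_disc: "\<And>z. cmod z \<le> 1 \<Longrightarrow> w z \<le> M"
    and growth: "\<And>z. 0 \<le> U z \<Longrightarrow> w z \<le> \<epsilon> * U z + C"
    and "0 \<le> M" "0 \<le> \<epsilon>" "0 < \<eta>" and z0: "0 < U z0" "1 < cmod z0"
  shows "w z0 \<le> M + \<epsilon> * U z0 + \<eta> * ln (cmod z0)"
proof -
  \<comment> \<open>\<rho> is large enough for the barrier to absorb the constant C on the outer circle\<close>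
  define \<rho> where "\<rho> = max (cmod z0 + 1) (exp (\<bar>C\<bar> / \<eta>))"
  define \<Omega> where "\<Omega> = {z. 0 < U z} \<inter> ball 0 \<rho> \<inter> {z. 1 < cmod z}"
  define h where "h z = - \<epsilon> * U z - \<eta> * ln (cmod (z - 0))" for z
  have "\<bar>C\<bar> \<le> \<eta> * ln \<rho>"
  proof -
    have "\<bar>C\<bar> / \<eta> \<le> ln \<rho>"
      by (metis \<rho>_def exp_gt_zero ln_exp ln_le_cancel_iff max.cobounded2 order_less_le_trans)
    thus ?thesis using \<open>0 < \<eta>\<close> by (simp add: field_simps)
  qed
  have \<Omega>: "open \<Omega>" "bounded \<Omega>"
    unfolding \<Omega>_def by (auto intro!: open_Int open_Collect_less continuous_intros U(1) bounded_Int)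
  have closure: "closure \<Omega> \<subseteq> {z. 0 \<le> U z} \<inter> cball 0 \<rho> \<inter> {z. 1 \<le> cmod z}"
    unfolding \<Omega>_def
    by (intro closure_minimal closed_Int closed_Collect_le U(1) continuous_intros) auto
  have "continuous_on {z. 1 \<le> cmod z} h"
    unfolding h_def by (intro continuous_intros continuous_on_subset[OF U(1)]) auto
  hence "continuous_on (closure \<Omega>) h" using closure continuous_on_subset by blast
  moreover have "mean_value_on h \<Omega>"
    unfolding h_def
    by (intro mean_value_on_diff mean_value_on_cmult mean_value_on_subset[OF U(2)] mean_value_on_ln_norm_diff)
      (auto simp: \<Omega>_def)
  moreover have "w z + h z \<le> M" if "z \<in> frontier \<Omega>" for z
  proof -
    have "z \<in> closure \<Omega>" "z \<notin> \<Omega>" using that \<Omega>(1) by (auto simp: frontier_def interior_open)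
    hence U0: "0 \<le> U z" and z1: "1 \<le> cmod z" and "U z = 0 \<or> cmod z = \<rho> \<or> cmod z = 1"
      using closure by (auto simp: \<Omega>_def)
    have "0 \<le> \<epsilon> * U z" using U0 \<open>0 \<le> \<epsilon>\<close> by simp
    have "0 \<le> \<eta> * ln (cmod z)" using z1 \<open>0 < \<eta>\<close> by simp
    consider "U z = 0" | "cmod z = \<rho>" | "cmod z = 1" using \<open>U z = 0 \<or> _\<close> by blast
    thus ?thesis
    proof cases
      case 1
      thus ?thesis using zero_set[OF 1] \<open>0 \<le> \<eta> * ln (cmod z)\<close> by (simp add: h_def)
    next
      case 2
      thus ?thesis using growth[OF U0] \<open>\<bar>C\<bar> \<le> \<eta> * ln \<rho>\<close> \<open>0 \<le> M\<close> by (simp add: h_def)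
    next
      case 3
      thus ?thesis using unit_disc[of z] \<open>0 \<le> \<epsilon> * U z\<close> by (simp add: h_def)
    qed
  qed
  moreover have "z0 \<in> \<Omega>" using z0 by (simp add: \<Omega>_def \<rho>_def)
  ultimately have "w z0 + h z0 \<le> M"
    by (rule subharmonic_add_mean_value_maximum_principle[OF sub \<Omega>])
  thus ?thesis by (simp add: h_def)
qed

lemma subharmonic_bounded_where_nonneg:
  fixes w U :: "complex \<Rightarrow> real"
  assumes sub: "subharmonic_plane w" and U: "continuous_on UNIV U" "mean_value_on U UNIV"
    and growth: "\<And>\<epsilon>. 0 < \<epsilon> \<Longrightarrow> \<exists>C. \<forall>z. 0 \<le> U z \<longrightarrow> w z \<le> \<epsilon> * U z + C"
  shows "\<exists>M. \<forall>z. 0 \<le> U z \<longrightarrow> w z \<le> M"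
proof -
  obtain C1 where C1: "\<And>z. 0 \<le> U z \<Longrightarrow> w z \<le> U z + C1" using growth[of 1] by auto
  obtain K where "\<forall>z\<in>cball 0 1. w z \<le> K"
    using usc_bounded_above_on_compact[of w "cball 0 1"] sub by (auto simp: subharmonic_plane_def)
  hence K: "\<And>z. cmod z \<le> 1 \<Longrightarrow> w z \<le> K" by simp
  define M where "M = max (max C1 K) 0"
  have "w z0 \<le> M" if "0 \<le> U z0" for z0
  proof (cases "U z0 = 0 \<or> cmod z0 \<le> 1")
    case True thus ?thesis using C1[of z0] K[of z0] by (auto simp: M_def)
  next
    case False
    with \<open>0 \<le> U z0\<close> have z0: "0 < U z0" "1 < cmod z0" by auto
    show ?thesis
    proof (rule le_of_forall_pos_le_add_mult[where c="U z0"])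
      fix \<epsilon> :: real assume "0 < \<epsilon>"
      then obtain C where "\<And>z. 0 \<le> U z \<Longrightarrow> w z \<le> \<epsilon> * U z + C" using growth by blast
      show "w z0 \<le> M + \<epsilon> * U z0"
      proof (rule le_of_forall_pos_le_add_mult[where c="ln (cmod z0)"])
        fix \<eta> :: real assume "0 < \<eta>"
        show "w z0 \<le> M + \<epsilon> * U z0 + \<eta> * ln (cmod z0)"
        proof (rule subharmonic_le_log_barrier_where_pos[OF sub U])
          show "w z \<le> M" if "U z = 0" for z using C1[of z] that by (simp add: M_def)
          show "w z \<le> M" if "cmod z \<le> 1" for z using K[OF that] by (simp add: M_def)
        qed (use \<open>\<And>z. 0 \<le> U z \<Longrightarrow> w z \<le> \<epsilon> * U z + C\<close> \<open>0 < \<epsilon>\<close> \<open>0 < \<eta>\<close> z0 in \<open>auto simp: M_def\<close>)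
      qed (use z0 in simp)
    qed (use z0 in simp)
  qed
  thus ?thesis by blast
qed

lemma subharmonic_le_log_barrier_annulus:
  fixes w :: "complex \<Rightarrow> real"
  assumes sub: "subharmonic_plane w" and bounded: "\<And>z. w z \<le> B"
    and inner: "\<And>y. cmod (y - a) = r \<Longrightarrow> w y \<le> m" and "0 < r" "r < cmod (z - a)" "0 < \<eta>"
  shows "w z \<le> m + \<eta> * (ln (cmod (z - a)) - ln r)"
proof -
  define R where "R = max (cmod (z - a) + 1) (r * exp (\<bar>B - m\<bar> / \<eta>))"
  define \<Omega> where "\<Omega> = ball a R \<inter> {y. r < cmod (y - a)}"
  define h where "h y = \<eta> * ln r - \<eta> * ln (cmod (y - a))" for y
  have "\<bar>B - m\<bar> \<le> \<eta> * (ln R - ln r)"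
  proof -
    have "ln (r * exp (\<bar>B - m\<bar> / \<eta>)) \<le> ln R"
      using \<open>0 < r\<close> by (subst ln_le_cancel_iff) (auto simp: R_def less_max_iff_disj)
    thus ?thesis using \<open>0 < r\<close> \<open>0 < \<eta>\<close> by (simp add: ln_mult field_simps)
  qed
  have \<Omega>: "open \<Omega>" "bounded \<Omega>"
    unfolding \<Omega>_def by (auto intro!: open_Int open_Collect_less continuous_intros bounded_Int)
  have closure: "closure \<Omega> \<subseteq> cball a R \<inter> {y. r \<le> cmod (y - a)}"
    unfolding \<Omega>_def
    by (intro closure_minimal closed_Int closed_cball closed_Collect_le continuous_intros)
      (auto simp: dist_norm norm_minus_commute)
  have "continuous_on {y. r \<le> cmod (y - a)} h"
    unfolding h_def using \<open>0 < r\<close> by (intro continuous_intros) auto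
  hence "continuous_on (closure \<Omega>) h" using closure continuous_on_subset by blast
  moreover have "mean_value_on h \<Omega>"
    unfolding h_def using \<open>0 < r\<close>
    by (intro mean_value_on_diff mean_value_on_const mean_value_on_cmult mean_value_on_ln_norm_diff)
      (simp add: \<Omega>_def)
  moreover have "w y + h y \<le> m" if "y \<in> frontier \<Omega>" for y
  proof -
    have "y \<in> closure \<Omega>" "y \<notin> \<Omega>" using that \<Omega>(1) by (auto simp: frontier_def interior_open)
    hence "cmod (y - a) = R \<or> cmod (y - a) = r"
      using closure by (auto simp: \<Omega>_def dist_norm norm_minus_commute)
    thus ?thesis
      using bounded[of y] inner[of y] \<open>\<bar>B - m\<bar> \<le> \<eta> * (ln R - ln r)\<close> by (auto simp: h_def algebra_simps)
  qed
  moreover have "z \<in> \<Omega>" using \<open>r < cmod (z - a)\<close> by (simp add: \<Omega>_def R_def dist_norm norm_minus_commute)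
  ultimately have "w z + h z \<le> m"
    by (rule subharmonic_add_mean_value_maximum_principle[OF sub \<Omega>])
  thus ?thesis by (simp add: h_def algebra_simps)
qed

lemma subharmonic_bounded_above_le:
  fixes w :: "complex \<Rightarrow> real"
  assumes sub: "subharmonic_plane w" and bounded: "\<And>z. w z \<le> B"
  shows "w z \<le> w a"
proof (cases "z = a")
  case False
  show ?thesis
  proof (rule field_le_epsilon)
    fix e :: real assume "0 < e"
    hence "a \<in> {y. w y < w a + e}" by simp
    then obtain r1 where r1: "0 < r1" "ball a r1 \<subseteq> {y. w y < w a + e}"
      using sub open_contains_ball by (metis subharmonic_plane_def)
    define r where "r = min (r1/2) (cmod (z - a) / 2)"
    have "0 < cmod (z - a)" using False by simp
    hence r: "0 < r" "r < r1" "r < cmod (z - a)" using r1 by (auto simp: r_def min_def)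
    show "w z \<le> w a + e"
    proof (rule le_of_forall_pos_le_add_mult[where c="ln (cmod (z - a)) - ln r"])
      fix \<eta> :: real assume "0 < \<eta>"
      show "w z \<le> w a + e + \<eta> * (ln (cmod (z - a)) - ln r)"
      proof (rule subharmonic_le_log_barrier_annulus[OF sub bounded _ r(1,3) \<open>0 < \<eta>\<close>])
        show "w y \<le> w a + e" if "cmod (y - a) = r" for y
          using that r(2) r1(2) by (force simp: dist_norm norm_minus_commute)
      qed
    qed (use ln_mono[of r "cmod (z - a)"] r in simp)
  qed
qed simp

lemma subharmonic_plane_bounded_above_constant:
  fixes w :: "complex \<Rightarrow> real"
  assumes "subharmonic_plane w" and "\<And>z. w z \<le> B"
  shows "\<exists>c. \<forall>z. w z = c"
  using subharmonic_bounded_above_le[OF assms] by (metis order_antisym)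

theorem theorem4:
  fixes w u :: "complex \<Rightarrow> real" and \<Phi> :: "real \<Rightarrow> real"
  assumes "subharmonic_plane w"
    and "harmonic_plane u"
    and "\<forall>t. \<Phi> t \<ge> 0"
    and "\<forall>x. \<exists>e>0. bounded (\<Phi> ` ball x e)"
    and "((\<lambda>t. \<Phi> t / \<bar>t\<bar>) \<longlongrightarrow> 0) at_infinity"
    and "\<forall>z. w z \<le> \<Phi> (u z)"
  shows "\<exists>c. \<forall>z. w z = c"
proof -
  have bounded_where_nonneg: "\<exists>M. \<forall>z. 0 \<le> U z \<longrightarrow> w z \<le> M"
    if U: "U = u \<or> U = (\<lambda>z. - u z)" for U
  proof (rule subharmonic_bounded_where_nonneg[OF assms(1)])
    show "continuous_on UNIV U"
      using U harmonic_plane_continuous[OF assms(2)] by (auto intro: continuous_intros)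
    show "mean_value_on U UNIV"
      using U harmonic_plane_mean_value_on[OF assms(2)] mean_value_on_cmult[of u UNIV "-1"] by auto
    fix \<epsilon> :: real assume "0 < \<epsilon>"
    then obtain C where "\<forall>t. \<Phi> t \<le> \<epsilon> * \<bar>t\<bar> + C" using sublinear_growth_bound assms(4,5) by blast
    moreover have "\<bar>u z\<bar> = U z" if "0 \<le> U z" for z using U that by auto
    ultimately show "\<exists>C. \<forall>z. 0 \<le> U z \<longrightarrow> w z \<le> \<epsilon> * U z + C"
      using assms(6) by (metis order_trans)
  qed
  obtain M1 M2 where "\<And>z. 0 \<le> u z \<Longrightarrow> w z \<le> M1" "\<And>z. 0 \<le> - u z \<Longrightarrow> w z \<le> M2"
    using bounded_where_nonneg[of u] bounded_where_nonneg[of "\<lambda>z. - u z"] by auto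
  hence "w z \<le> max M1 M2" for z by (cases "0 \<le> u z") (auto simp: le_max_iff_disj)
  thus ?thesis by (rule subharmonic_plane_bounded_above_constant[OF assms(1)])
qed

end
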